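(* Under the standing assumptions, let $u^0\in\operatorname{dom}(J)$ with $|u^0|_H=1$, and let sequences $(u^k)$, $(u^{k+1/2})$, $(\zeta^k)$ be generated by the inverse power method $$\zeta^k\in\partial H(u^k),\qquad u^{k+1/2}\in\partial J^*(\zeta^k),\qquad u^{k+1}=\frac{u^{k+1/2}}{|u^{k+1/2}|_H},$$ where it is assumed that each step is well defined and $u^{k+1/2}\ne0$ for all $k$. Then $R_*(\zeta^k)\le R_*(\zeta^{k+1})$ for all $k\in\mathbb N$. (No homogeneity of $J$ is required.)
   Context: Standing assumptions: $X$ is a real reflexive Banach space with dual $X^*$ and duality pairing $\langle\cdot,\cdot\rangle$; $\Gamma_0(X)$ is the class of proper, lower semi-continuous, convex functionals $X\to\mathbb{R}\cup\{+\infty\}$. Fix $1<p<\infty$ and $q=\frac{p}{p-1}$. Let $J\in\Gamma_0(X)$, and let $H\in\Gamma_0(X)$ be absolutely $p$-homogeneous ($H(tu)=|t|^pH(u)$) such that $|u|_H:=(pH(u))^{1/p}$ is a norm on $X$, so $H(u)=\frac1p|u|_H^p$. The dual norm is $|\zeta|_{H^*}=\sup_{u\ne0}\langle\zeta,u\rangle/|u|_H$, and $H^*(\zeta)=\frac1q|\zeta|_{H^*}^q$. The Fenchel conjugate is $J^*(\zeta)=\sup_{u\in X}\langle\zeta,u\rangle-J(u)$ and the subdifferential is $\partial J(u)=\{\zeta\in X^*:\ J(u)+\langle\zeta,v-u\rangle\le J(v)\ \forall v\in X\}$. Growth assumption: there is $c>0$ with $H(u)\le cJ(u)$ for all $u\in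 X$. The dual Rayleigh quotient is $R_*(\zeta)=J^*(\zeta)/H^*(\zeta)$ for $\zeta\ne0$. $\operatorname{dom}(J)=\{u:J(u)<\infty\}$. *)

theory Defs
  imports "HOL-Analysis.Analysis"
begin

text \<open>Dual space X* is modelled by continuous linear functionals 'a \<Rightarrow>L real;
the duality pairing is application. Extended-real valued functionals use ereal.\<close>

definition reflexive_space :: "'a::banach itself \<Rightarrow> bool" where
  "reflexive_space _ \<longleftrightarrow>
     (\<forall>\<phi> :: ('a \<Rightarrow>\<^sub>L real) \<Rightarrow>\<^sub>L real. \<exists>x::'a. \<forall>\<zeta>. blinfun_apply \<phi> \<zeta> = blinfun_apply \<zeta> x)"

definition proper_fun :: "('b \<Rightarrow> ereal) \<Rightarrow> bool" where
  "proper_fun f \<longleftrightarrow> (\<forall>x. f x \<noteq> -\<infinity>) \<and> (\<exists>x. f x \<noteq> \<infinity>)"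

definition convex_fun :: "('b::real_vector \<Rightarrow> ereal) \<Rightarrow> bool" where
  "convex_fun f \<longleftrightarrow> (\<forall>x y t. 0 \<le> t \<and> t \<le> 1 \<longrightarrow>
      f ((1 - t) *\<^sub>R x + t *\<^sub>R y) \<le> ereal (1 - t) * f x + ereal t * f y)"

definition lsc_fun :: "('b::metric_space \<Rightarrow> ereal) \<Rightarrow> bool" where
  "lsc_fun f \<longleftrightarrow> (\<forall>x X. X \<longlonglongrightarrow> x \<longrightarrow> f x \<le> liminf (\<lambda>n. f (X n)))"

definition Gamma0 :: "('b::real_normed_vector \<Rightarrow> ereal) \<Rightarrow> bool" where
  "Gamma0 f \<longleftrightarrow> proper_fun f \<and> lsc_fun f \<and> convex_fun f"

definition is_norm :: "('b::real_vector \<Rightarrow> real) \<Rightarrow> bool" where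
  "is_norm N \<longleftrightarrow> (\<forall>x. 0 \<le> N x) \<and> (\<forall>x. N x = 0 \<longleftrightarrow> x = 0) \<and>
     (\<forall>x y. N (x + y) \<le> N x + N y) \<and> (\<forall>t x. N (t *\<^sub>R x) = \<bar>t\<bar> * N x)"

definition fconj :: "('a::real_normed_vector \<Rightarrow> ereal) \<Rightarrow> ('a \<Rightarrow>\<^sub>L real) \<Rightarrow> ereal" where
  "fconj J \<zeta> = (SUP u. ereal (blinfun_apply \<zeta> u) - J u)"

definition subdiff :: "('a::real_normed_vector \<Rightarrow> ereal) \<Rightarrow> 'a \<Rightarrow> ('a \<Rightarrow>\<^sub>L real) set" where
  "subdiff J u = {\<zeta>. \<forall>v. J u + ereal (blinfun_apply \<zeta> (v - u)) \<le> J v}"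

text \<open>Subdifferential of a functional on X*, viewed in X via reflexivity
  (X** identified with X through the canonical embedding).\<close>
definition subdiff_dual :: "(('a::real_normed_vector \<Rightarrow>\<^sub>L real) \<Rightarrow> ereal) \<Rightarrow> ('a \<Rightarrow>\<^sub>L real) \<Rightarrow> 'a set" where
  "subdiff_dual G \<zeta> = {u. \<forall>\<eta>. G \<zeta> + ereal (blinfun_apply (\<eta> - \<zeta>) u) \<le> G \<eta>}"

definition dual_rayleigh :: "('a::real_normed_vector \<Rightarrow> ereal) \<Rightarrow> ('a \<Rightarrow> ereal) \<Rightarrow> ('a \<Rightarrow>\<^sub>L real) \<Rightarrow> ereal" where
  "dual_rayleigh J H \<zeta> = fconj J \<zeta> / fconj H \<zeta>"

end

theory Submission
  imports Defs
begin

text \<open>Each \<open>u k\<close> is a unit vector for \<open>|\<cdot>|\<^sub>H\<close> and \<open>\<zeta> k \<in> \<partial>H(u k)\<close>, so Euler's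
  identity gives \<open>\<langle>\<zeta> k, u k\<rangle> = 1\<close> and \<open>\<langle>\<zeta> k, v\<rangle> \<le> |v|\<^sub>H\<close>; hence \<open>H\<^sup>*(\<zeta> k) = 1 - 1/p\<close>
  for every \<open>k\<close>, and only the numerator \<open>J\<^sup>*(\<zeta> k)\<close> of the dual Rayleigh quotient
  varies. It is nondecreasing by the subgradient inequality of \<open>J\<^sup>*\<close> at \<open>\<zeta> k\<close> tested
  with \<open>\<zeta> (k+1)\<close>: the increment is at least \<open>\<langle>\<zeta> (k+1) - \<zeta> k, uh k\<rangle>\<close>, which is
  nonnegative because \<open>\<langle>\<zeta> (k+1), uh k\<rangle> = |uh k|\<^sub>H \<ge> \<langle>\<zeta> k, uh k\<rangle>\<close>.\<close>

lemma supporting_slope_of_powr_at_1: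
  fixes a p :: real
  assumes "0 < p" and below: "\<And>t. 0 < t \<Longrightarrow> (t - 1) * a \<le> (t powr p - 1) / p"
  shows "a = 1"
proof -
  define f where "f t = (t powr p - 1) / p - (t - 1) * a" for t :: real
  have "(f has_real_derivative 1 - a) (at 1)"
    unfolding f_def using \<open>0 < p\<close> by (auto intro!: derivative_eq_intros)
  moreover have "f 1 \<le> f t" if "\<bar>1 - t\<bar> < 1" for t
    using below[of t] that by (simp add: f_def)
  ultimately have "1 - a = 0"
    by (intro DERIV_local_min[of f _ 1 1]) auto
  then show ?thesis by simp
qed

lemma fconj_at_subgradient:
  fixes F :: "'a::real_normed_vector \<Rightarrow> real"
  assumes "\<zeta> \<in> subdiff (\<lambda>x. ereal (F x)) u"
  shows "fconj (\<lambda>x. ereal (F x)) \<zeta> = ereal (\<zeta> u - F u)"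
  unfolding fconj_def
proof (rule antisym)
  have "\<zeta> v - F v \<le> \<zeta> u - F u" for v
  proof -
    have "F u + \<zeta> (v - u) \<le> F v"
      using assms by (simp add: subdiff_def)
    then show ?thesis
      by (simp add: blinfun.diff_right)
  qed
  then show "(SUP v. ereal (\<zeta> v) - ereal (F v)) \<le> ereal (\<zeta> u - F u)"
    by (intro SUP_least) simp
  show "ereal (\<zeta> u - F u) \<le> (SUP v. ereal (\<zeta> v) - ereal (F v))"
    by (rule SUP_upper2[of u]) simp_all
qed

lemma subdiff_dual_mono:
  fixes \<zeta> \<eta> :: "'a::real_normed_vector \<Rightarrow>\<^sub>L real"
  assumes "u \<in> subdiff_dual G \<zeta>" and "\<zeta> u \<le> \<eta> u"
  shows "G \<zeta> \<le> G \<eta>"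
proof -
  have "0 \<le> (\<eta> - \<zeta>) u"
    using assms(2) by (simp add: blinfun.diff_left)
  then have "G \<zeta> \<le> G \<zeta> + ereal ((\<eta> - \<zeta>) u)"
    by (cases "G \<zeta>") auto
  also have "\<dots> \<le> G \<eta>"
    using assms(1) by (simp add: subdiff_dual_def)
  finally show ?thesis .
qed

locale homogeneous_gauge =
  fixes H :: "'a::real_normed_vector \<Rightarrow> real" and p :: real
  assumes p_gt_1: "1 < p"
    and convex: "convex_fun (\<lambda>x. ereal (H x))"
    and homogeneous: "\<And>t x. H (t *\<^sub>R x) = \<bar>t\<bar> powr p * H x"
    and is_norm_gauge: "is_norm (\<lambda>x. (p * H x) powr (1 / p))"
begin

definition gauge :: "'a \<Rightarrow> real" where
  "gauge x = (p * H x) powr (1 / p)"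

lemma H_zero: "H 0 = 0"
  using homogeneous[of 0 0] p_gt_1 by simp

text \<open>Nonnegativity is not implied by the norm hypothesis, since \<open>powr\<close> of a
  negative base is a junk value; it comes from convexity and evenness.\<close>
lemma H_nonneg: "0 \<le> H x"
proof -
  have "ereal (H ((1 - 1/2) *\<^sub>R x + (1/2) *\<^sub>R (- x)))
      \<le> ereal (1 - 1/2) * ereal (H x) + ereal (1/2) * ereal (H (- x))"
    using convex[unfolded convex_fun_def, rule_format, of "1/2" x "- x"] by simp
  moreover have "H (- x) = H x"
    using homogeneous[of "-1" x] by simp
  ultimately show ?thesis
    by (simp add: scaleR_left_diff_distrib H_zero)
qed

lemma gauge_scaleR: "gauge (t *\<^sub>R x) = \<bar>t\<bar> * gauge x"
  using is_norm_gauge by (simp add: is_norm_def gauge_def)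

lemma gauge_pos: "x \<noteq> 0 \<Longrightarrow> 0 < gauge x"
  using is_norm_gauge unfolding is_norm_def gauge_def by (metis order_le_less)

lemma gauge_eq_1_iff: "gauge x = 1 \<longleftrightarrow> H x = 1 / p"
proof
  assume "gauge x = 1"
  then have "p * H x \<noteq> 0"
    by (auto simp: gauge_def)
  then have "p * H x = ((p * H x) powr (1 / p)) powr p"
    using H_nonneg[of x] p_gt_1 by (simp add: powr_powr)
  also have "\<dots> = 1"
    using \<open>gauge x = 1\<close> by (simp add: gauge_def)
  finally show "H x = 1 / p"
    using p_gt_1 by (simp add: field_simps)
qed (use p_gt_1 in \<open>simp add: gauge_def\<close>)

lemma gauge_normalize: "x \<noteq> 0 \<Longrightarrow> gauge ((1 / gauge x) *\<^sub>R x) = 1"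
  using gauge_pos[of x] by (simp add: gauge_scaleR)

lemma subgradient_apply_unit:
  assumes "\<zeta> \<in> subdiff (\<lambda>x. ereal (H x)) u" and "gauge u = 1"
  shows "\<zeta> u = 1"
proof (rule supporting_slope_of_powr_at_1)
  show "0 < p" using p_gt_1 by simp
  have Hu: "H u = 1 / p"
    using assms(2) gauge_eq_1_iff by simp
  fix t :: real
  assume "0 < t"
  have "H u + \<zeta> (t *\<^sub>R u - u) \<le> H (t *\<^sub>R u)"
    using assms(1) by (simp add: subdiff_def)
  then show "(t - 1) * \<zeta> u \<le> (t powr p - 1) / p"
    using \<open>0 < t\<close> by (simp add: homogeneous Hu blinfun.diff_right blinfun.scaleR_right
        algebra_simps diff_divide_distrib)
qed

lemma subgradient_le_gauge:
  assumes "\<zeta> \<in> subdiff (\<lambda>x. ereal (H x)) u" and "gauge u = 1"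
  shows "\<zeta> v \<le> gauge v"
proof (cases "v = 0")
  case True
  then show ?thesis
    by (simp add: gauge_def H_zero)
next
  case False
  define w where "w = (1 / gauge v) *\<^sub>R v"
  have "H w = H u"
    using gauge_normalize[OF False] assms(2) by (simp add: w_def gauge_eq_1_iff)
  moreover have "H u + \<zeta> (w - u) \<le> H w"
    using assms(1) by (simp add: subdiff_def)
  ultimately have "\<zeta> w \<le> 1"
    using subgradient_apply_unit[OF assms] by (simp add: blinfun.diff_right)
  then show ?thesis
    using gauge_pos[OF False] by (simp add: w_def blinfun.scaleR_right divide_le_eq)
qed

lemma fconj_at_unit_subgradient:
  assumes "\<zeta> \<in> subdiff (\<lambda>x. ereal (H x)) u" and "gauge u = 1"
  shows "fconj (\<lambda>x. ereal (H x)) \<zeta> = ereal (1 - 1 / p)"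
  using fconj_at_subgradient[OF assms(1)] subgradient_apply_unit[OF assms] assms(2)
  by (simp add: gauge_eq_1_iff)

end

theorem lemma3p1:
  fixes J :: "'a::banach \<Rightarrow> ereal" and H :: "'a \<Rightarrow> real" and p c :: real
    and u uh :: "nat \<Rightarrow> 'a" and \<zeta> :: "nat \<Rightarrow> ('a \<Rightarrow>\<^sub>L real)"
  assumes refl: "reflexive_space TYPE('a)"
    and p: "1 < p"
    and J: "Gamma0 J"
    and H: "Gamma0 (\<lambda>x. ereal (H x))"
    and Hhom: "\<forall>t x. H (t *\<^sub>R x) = \<bar>t\<bar> powr p * H x"
    and Hnorm: "is_norm (\<lambda>x. (p * H x) powr (1 / p))"
    and growth: "0 < c" "\<forall>x. ereal (H x) \<le> ereal c * J x"
    and u0dom: "J (u 0) \<noteq> \<infinity>"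
    and u0norm: "(p * H (u 0)) powr (1 / p) = 1"
    and zeta: "\<forall>k. \<zeta> k \<in> subdiff (\<lambda>x. ereal (H x)) (u k)"
    and uh: "\<forall>k. uh k \<in> subdiff_dual (fconj J) (\<zeta> k)"
    and uh_nz: "\<forall>k. uh k \<noteq> 0"
    and step: "\<forall>k. u (Suc k) = (1 / (p * H (uh k)) powr (1 / p)) *\<^sub>R uh k"
  shows "\<forall>k. dual_rayleigh J (\<lambda>x. ereal (H x)) (\<zeta> k)
             \<le> dual_rayleigh J (\<lambda>x. ereal (H x)) (\<zeta> (Suc k))"
proof
  \<comment> \<open>Reflexivity, the growth bound and \<open>u 0 \<in> dom J\<close> only make the iteration well posed.\<close>
  fix k
  interpret homogeneous_gauge H p
    using p H Hhom Hnorm by unfold_locales (auto simp: Gamma0_def)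
  have step': "u (Suc j) = (1 / gauge (uh j)) *\<^sub>R uh j" for j
    using step by (simp add: gauge_def)
  have unit: "gauge (u j) = 1" for j
    using u0norm gauge_normalize uh_nz step' by (cases j) (auto simp: gauge_def)
  have "\<zeta> k (uh k) \<le> gauge (uh k)"
    using subgradient_le_gauge zeta unit by blast
  also have "\<dots> = \<zeta> (Suc k) (gauge (uh k) *\<^sub>R u (Suc k))"
    using subgradient_apply_unit zeta unit by (simp add: blinfun.scaleR_right)
  also have "gauge (uh k) *\<^sub>R u (Suc k) = uh k"
    using gauge_pos[of "uh k"] uh_nz by (simp add: step')
  finally have "fconj J (\<zeta> k) \<le> fconj J (\<zeta> (Suc k))"
    using subdiff_dual_mono uh by blast
  moreover have "fconj (\<lambda>x. ereal (H x)) (\<zeta> j) = ereal (1 - 1 / p)" for j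
    using fconj_at_unit_subgradient zeta unit by blast
  ultimately show "dual_rayleigh J (\<lambda>x. ereal (H x)) (\<zeta> k)
             \<le> dual_rayleigh J (\<lambda>x. ereal (H x)) (\<zeta> (Suc k))"
    using p by (simp add: dual_rayleigh_def ereal_divide_right_mono)
qed

end
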